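(* For every integer $s \ge 2$, $R(s,s) \le s$ and $R(s,s) \ge p$, where $p$ is the smallest prime factor of $s$. Moreover, if $s$ is even then $R(s,s)=2$.
   Context: Let $Z_s$ be the ring of integers modulo $s$. A family $\mathcal{F} \subseteq Z_s^q$ is covering if for every ordered pair of distinct vectors $u,v \in \mathcal{F}$ and every $a \in Z_s$ there is a coordinate $i$ with $u_i - v_i = a$. $R(s,q)$ denotes the maximum possible cardinality of a covering family in $Z_s^q$. *)

theory Defs
  imports Main "HOL-Library.FuncSet" "HOL-Computational_Algebra.Primes"
begin

text \<open>Vectors of Z_s^q: functions on coordinates {0..<q} with values in {0..<s}
  (representatives of Z_s), extensional outside {0..<q}.\<close>
definition vecs :: "nat \<Rightarrow> nat \<Rightarrow> (nat \<Rightarrow> nat) set" where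
  "vecs s q = {0..<q} \<rightarrow>\<^sub>E {0..<s}"

definition covering :: "nat \<Rightarrow> nat \<Rightarrow> (nat \<Rightarrow> nat) set \<Rightarrow> bool" where
  "covering s q F \<longleftrightarrow> F \<subseteq> vecs s q \<and>
     (\<forall>u\<in>F. \<forall>v\<in>F. u \<noteq> v \<longrightarrow>
        (\<forall>a\<in>{0..<s}. \<exists>i\<in>{0..<q}. (int (u i) - int (v i)) mod int s = int a))"

definition R :: "nat \<Rightarrow> nat \<Rightarrow> nat" where
  "R s q = Max {card F | F. covering s q F}"

end

theory Submission
  imports Defs "HOL-Number_Theory.Number_Theory"
begin

(* If u and v are distinct members of a covering family in Z_s^s, the s coordinates of u - v
   take all s residues, so i \<mapsto> u_i - v_i is a bijection of Z_s. Hence u_1 - u_0 already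
   separates the members, so there are at most s of them. Summing coordinates gives
   \<Sigma>u - \<Sigma>v = 0 + 1 + ... + (s - 1) = s/2 (mod s) when s is even, and three members would
   force s/2 + s/2 = s/2 (mod s). Conversely, the multiples k (0, 1, ..., s - 1) for k < n
   form a covering family whenever all differences of indices below n are units mod s, in
   particular for n the least prime factor of s. *)

lemma finite_covering_cards: "finite {card F | F. covering s q F}"
proof (rule finite_subset)
  show "{card F | F. covering s q F} \<subseteq> {..card (vecs s q)}"
    unfolding covering_def vecs_def by (auto intro!: card_mono finite_PiE)
qed simp

lemma card_le_R: "covering s q F \<Longrightarrow> card F \<le> R s q"
  unfolding R_def using finite_covering_cards by (auto intro: Max_ge)

lemma R_le:
  assumes "\<And>F. covering s q F \<Longrightarrow> card F \<le> b"
  shows "R s q \<le> b"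
proof -
  have "covering s q {}"
    by (simp add: covering_def)
  then show ?thesis
    unfolding R_def using finite_covering_cards assms by (auto intro!: Max.boundedI)
qed

lemma covering_diff_image:
  assumes cov: "covering s q F" and "0 < s" and "u \<in> F" "v \<in> F" "u \<noteq> v"
  shows "(\<lambda>i. (int (u i) - int (v i)) mod int s) ` {0..<q} = {0..<int s}"
proof
  show "(\<lambda>i. (int (u i) - int (v i)) mod int s) ` {0..<q} \<subseteq> {0..<int s}"
    using \<open>0 < s\<close> by auto
  show "{0..<int s} \<subseteq> (\<lambda>i. (int (u i) - int (v i)) mod int s) ` {0..<q}"
  proof
    fix a assume "a \<in> {0..<int s}"
    then have "nat a \<in> {0..<s}" and a: "a = int (nat a)"
      by auto
    with cov assms(3-5) obtain i where "i \<in> {0..<q}" "(int (u i) - int (v i)) mod int s = a"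
      unfolding covering_def by metis
    then show "a \<in> (\<lambda>i. (int (u i) - int (v i)) mod int s) ` {0..<q}"
      by blast
  qed
qed

lemma covering_diff_bij:
  assumes "covering s s F" "0 < s" "u \<in> F" "v \<in> F" "u \<noteq> v"
  shows "bij_betw (\<lambda>i. (int (u i) - int (v i)) mod int s) {0..<s} {0..<int s}"
  using covering_diff_image[OF assms] by (simp add: bij_betw_def eq_card_imp_inj_on)

lemma covering_card_le:
  assumes cov: "covering s s F" and "2 \<le> s"
  shows "card F \<le> s"
proof -
  let ?g = "\<lambda>u. (int (u 1) - int (u 0)) mod int s"
  have "inj_on ?g F"
  proof (rule inj_onI, rule ccontr)
    fix u v assume "u \<in> F" "v \<in> F" "?g u = ?g v" "u \<noteq> v"
    then have "inj_on (\<lambda>i. (int (u i) - int (v i)) mod int s) {0..<s}"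
      using covering_diff_bij[OF cov] \<open>2 \<le> s\<close> by (simp add: bij_betw_def)
    moreover from \<open>?g u = ?g v\<close>
    have "(int (u 1) - int (v 1)) mod int s = (int (u 0) - int (v 0)) mod int s"
      by (auto simp: mod_eq_dvd_iff algebra_simps)
    ultimately have "(1::nat) = 0"
      by (rule inj_onD) (use \<open>2 \<le> s\<close> in auto)
    then show False
      by simp
  qed
  then have "card F = card (?g ` F)"
    by (simp add: card_image)
  also have "\<dots> \<le> card {0..<int s}"
    using \<open>2 \<le> s\<close> by (intro card_mono) auto
  finally show ?thesis
    by simp
qed

lemma covering_sum_diff_cong:
  assumes "covering s s F" "0 < s" "u \<in> F" "v \<in> F" "u \<noteq> v"
  shows "[(\<Sum>i<s. int (u i)) - (\<Sum>i<s. int (v i)) = \<Sum>{0..<int s}] (mod int s)"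
proof -
  have "[(\<Sum>i<s. int (u i)) - (\<Sum>i<s. int (v i)) = (\<Sum>i<s. (int (u i) - int (v i)) mod int s)] (mod int s)"
    by (simp add: cong_def mod_sum_eq sum_subtractf)
  also have "(\<Sum>i<s. (int (u i) - int (v i)) mod int s) = \<Sum>{0..<int s}"
    using sum.reindex_bij_betw[OF covering_diff_bij[OF assms], of id] by (simp add: lessThan_atLeast0)
  finally show ?thesis .
qed

lemma sum_residues_even_cong:
  assumes "even s"
  shows "[\<Sum>{0..<int s} = int (s div 2)] (mod int s)"
proof -
  obtain m where s: "s = 2 * m"
    using assms by blast
  have gauss: "2 * (\<Sum>a<n. int a) = int n * (int n - 1)" for n
    by (induction n) (auto simp: algebra_simps)
  have "\<Sum>{0..<int s} = (\<Sum>a<s. int a)"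
    using sum.reindex[of int "{0..<s}" id] by (simp add: image_int_atLeastLessThan lessThan_atLeast0)
  with gauss[of s] have "2 * \<Sum>{0..<int s} = 2 * (int s * (int m - 1) + int m)"
    unfolding s by (simp add: algebra_simps)
  then have "\<Sum>{0..<int s} = int s * (int m - 1) + int m"
    by simp
  then show ?thesis
    by (simp add: cong_def s)
qed

lemma covering_card_le_2:
  assumes cov: "covering s s F" and "2 \<le> s" "even s"
  shows "card F \<le> 2"
proof (rule ccontr)
  assume "\<not> card F \<le> 2"
  then obtain T where "T \<subseteq> F" "card T = 3"
    by (metis obtain_subset_with_card_n not_le Suc_leI numeral_3_eq_3 numeral_2_eq_2)
  then obtain u v w where uvw: "u \<in> F" "v \<in> F" "w \<in> F" "u \<noteq> v" "v \<noteq> w" "u \<noteq> w"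
    by (auto simp: card_3_iff)
  define S where "S x = (\<Sum>i<s. int (x i))" for x :: "nat \<Rightarrow> nat"
  define m where "m = int (s div 2)"
  have "0 < s"
    using \<open>2 \<le> s\<close> by simp
  have diff_cong: "[S x - S y = m] (mod int s)" if "x \<in> F" "y \<in> F" "x \<noteq> y" for x y
    unfolding S_def m_def
    using covering_sum_diff_cong[OF cov \<open>0 < s\<close> that] sum_residues_even_cong[OF \<open>even s\<close>]
    by (rule cong_trans)
  have "[m + m = S u - S w] (mod int s)"
    using cong_add[OF diff_cong[of u v] diff_cong[of v w]] uvw by (simp add: cong_sym_eq)
  from this diff_cong[OF uvw(1,3,6)] have "[m + m = m] (mod int s)"
    by (rule cong_trans)
  then have "int s dvd m"
    by (simp add: cong_iff_dvd_diff)
  moreover have "0 < m" "m < int s"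
    using \<open>2 \<le> s\<close> unfolding m_def by auto
  ultimately show False
    using zdvd_imp_le by fastforce
qed

definition multiples_family :: "nat \<Rightarrow> nat \<Rightarrow> (nat \<Rightarrow> nat) set" where
  "multiples_family s n = (\<lambda>k. \<lambda>i\<in>{0..<s}. k * i mod s) ` {0..<n}"

lemma coprime_diff_mult_surj:
  fixes k l :: nat
  assumes "coprime (int k - int l) (int s)" and "a < s"
  shows "\<exists>i<s. (int (k * i mod s) - int (l * i mod s)) mod int s = int a"
proof -
  obtain x where x: "[(int k - int l) * x = 1] (mod int s)"
    using cong_solve_coprime_int[OF assms(1)] by blast
  define i where "i = nat (int a * x mod int s)"
  have i: "int i = int a * x mod int s"
    unfolding i_def using \<open>a < s\<close> by simp
  then have "i < s"
    using \<open>a < s\<close> by (simp add: i_def nat_less_iff)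
  have "[int (k * i mod s) - int (l * i mod s) = (int k - int l) * int i] (mod int s)"
    by (simp add: cong_def zmod_int mod_diff_eq algebra_simps)
  also have "[(int k - int l) * int i = (int k - int l) * (int a * x)] (mod int s)"
    unfolding i by (intro cong_scalar_left) simp
  also have "(int k - int l) * (int a * x) = (int k - int l) * x * int a"
    by (simp add: algebra_simps)
  also have "[(int k - int l) * x * int a = 1 * int a] (mod int s)"
    using x by (rule cong_scalar_right)
  finally have "(int (k * i mod s) - int (l * i mod s)) mod int s = int a"
    using \<open>a < s\<close> by (simp add: cong_def)
  with \<open>i < s\<close> show ?thesis
    by blast
qed

lemma covering_multiples_family:
  assumes "\<And>d. 0 < d \<Longrightarrow> d < n \<Longrightarrow> coprime d s"
  shows "covering s s (multiples_family s n)"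
  unfolding covering_def
proof (intro conjI ballI impI)
  show "multiples_family s n \<subseteq> vecs s s"
    unfolding multiples_family_def vecs_def by (auto simp: restrict_PiE_iff)
next
  fix u v a
  assume "u \<in> multiples_family s n" "v \<in> multiples_family s n" "u \<noteq> v" "a \<in> {0..<s}"
  then obtain k l where u: "u = (\<lambda>i\<in>{0..<s}. k * i mod s)" and v: "v = (\<lambda>i\<in>{0..<s}. l * i mod s)"
    and kl: "k < n" "l < n"
    unfolding multiples_family_def by auto
  with \<open>u \<noteq> v\<close> have "coprime (nat \<bar>int k - int l\<bar>) s"
    by (intro assms) auto
  then have "coprime (int k - int l) (int s)"
    using coprime_int_iff[of "nat \<bar>int k - int l\<bar>" s] by simp
  then obtain i where "i < s" "(int (k * i mod s) - int (l * i mod s)) mod int s = int a"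
    using coprime_diff_mult_surj \<open>a \<in> {0..<s}\<close> by (metis atLeastLessThan_iff)
  then show "\<exists>i\<in>{0..<s}. (int (u i) - int (v i)) mod int s = int a"
    unfolding u v by auto
qed

lemma card_multiples_family:
  assumes "n \<le> s"
  shows "card (multiples_family s n) = n"
proof -
  have "inj_on (\<lambda>k. \<lambda>i\<in>{0..<s}. k * i mod s) {0..<n}"
  proof (rule inj_onI)
    fix k l assume "k \<in> {0..<n}" "l \<in> {0..<n}"
      and eq: "(\<lambda>i\<in>{0..<s}. k * i mod s) = (\<lambda>i\<in>{0..<s}. l * i mod s)"
    show "k = l"
    proof (cases "s = 1")
      case False
      with \<open>k \<in> {0..<n}\<close> \<open>l \<in> {0..<n}\<close> \<open>n \<le> s\<close> have "1 < s" "k < s" "l < s"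
        by auto
      then show ?thesis
        using fun_cong[OF eq, of 1] by simp
    qed (use \<open>k \<in> {0..<n}\<close> \<open>l \<in> {0..<n}\<close> \<open>n \<le> s\<close> in auto)
  qed
  then show ?thesis
    unfolding multiples_family_def by (simp add: card_image)
qed

lemma coprime_if_less_Min_prime_factors:
  fixes d s :: nat
  assumes "s \<noteq> 0" "0 < d" "d < Min (prime_factors s)"
  shows "coprime d s"
proof (rule ccontr)
  assume "\<not> coprime d s"
  then have "gcd d s \<noteq> 1"
    using coprime_iff_gcd_eq_1 by blast
  then obtain q where "prime q" "q dvd gcd d s"
    using prime_factor_nat by blast
  then have "q \<in> prime_factors s" "q dvd d"
    using \<open>s \<noteq> 0\<close> by (auto simp: prime_factors_dvd intro: dvd_trans)
  then have "Min (prime_factors s) \<le> q" "q \<le> d"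
    using \<open>0 < d\<close> by (simp_all add: dvd_imp_le)
  with assms show False
    by simp
qed

lemma Min_prime_factors_le:
  fixes s :: nat
  assumes "1 < s"
  shows "Min (prime_factors s) \<le> s"
proof -
  obtain q where "prime q" "q dvd s"
    using prime_factor_nat[of s] assms by auto
  then have "q \<in> prime_factors s"
    using assms by (simp add: prime_factors_dvd)
  then have "Min (prime_factors s) \<le> q"
    by simp
  also have "q \<le> s"
    using \<open>q dvd s\<close> assms by (simp add: dvd_imp_le)
  finally show ?thesis .
qed

lemma le_R_if_coprime_below:
  assumes "n \<le> s" and "\<And>d. 0 < d \<Longrightarrow> d < n \<Longrightarrow> coprime d s"
  shows "n \<le> R s s"
proof -
  have "covering s s (multiples_family s n)"
    using assms(2) by (rule covering_multiples_family)
  then show ?thesis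
    using card_multiples_family[OF assms(1)] by (metis card_le_R)
qed

theorem proposition4p1:
  fixes s :: nat
  assumes "s \<ge> 2"
  shows "R s s \<le> s \<and> Min (prime_factors s) \<le> R s s \<and> (even s \<longrightarrow> R s s = 2)"
proof -
  have "R s s \<le> s"
    using covering_card_le assms by (intro R_le)
  moreover have "Min (prime_factors s) \<le> R s s"
    using assms
    by (intro le_R_if_coprime_below Min_prime_factors_le coprime_if_less_Min_prime_factors) auto
  moreover have "R s s = 2" if "even s"
  proof (rule antisym)
    show "R s s \<le> 2"
      using covering_card_le_2 assms that by (intro R_le)
    show "2 \<le> R s s"
      using assms by (intro le_R_if_coprime_below) (auto simp: less_2_cases_iff)
  qed
  ultimately show ?thesis
    by blast
qed

end
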